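(* Let $A$ be a set with a ternary operation $p\colon A^3\to A$ and two constants $0,1\in A$ satisfying, for all $a,b,c,b_1,b_2,b_3\in A$: (T1) $p(0,a,1)=a$; (T2) $p(a,b,a)=a$; (T3) $p(a,p(b_1,b_2,b_3),c)=p(p(a,b_1,c),b_2,p(a,b_3,c))$; (T4) $p(a,0,b)=a=p(b,1,a)$. Define $\bar{a}=p(1,a,0)$, $a\cdot b=p(0,a,b)$, $a\circ b=p(a,b,1)$ and $a+b=p(a,b,\bar a)$. Then the following conditions are equivalent: (i) $(A,\circ,\cdot,\bar{()},0,1)$ is a Boolean algebra (with $\circ$ as join, $\cdot$ as meet, $\bar{()}$ as complement, $0$ as bottom and $1$ as top); (ii) $(A,+,\cdot,0,1)$ is a Boolean ring; (iii) $p(a,b,c)=(\bar{b}\cdot a)\circ (b\cdot c)$ for all $a,b,c\in A$; (iv) $p(a,a,b)=a\cdot b$ for all $a,b\in A$; (v) $p(a,b,b)=a\circ b$ for all $a,b\in A$.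
   Context: A Boolean ring is a unitary ring (with additive identity $0$ and multiplicative identity $1$) in which every element $x$ satisfies $x\cdot x=x$. *)

theory Defs
  imports "HOL-Algebra.Ring"
begin

definition is_boolean_algebra ::
  "('a \<Rightarrow> 'a \<Rightarrow> 'a) \<Rightarrow> ('a \<Rightarrow> 'a \<Rightarrow> 'a) \<Rightarrow> ('a \<Rightarrow> 'a) \<Rightarrow> 'a \<Rightarrow> 'a \<Rightarrow> bool" where
  "is_boolean_algebra jn mt cpl bt tp \<longleftrightarrow>
     (\<forall>x y. jn x y = jn y x) \<and> (\<forall>x y. mt x y = mt y x) \<and>
     (\<forall>x y z. jn (jn x y) z = jn x (jn y z)) \<and>
     (\<forall>x y z. mt (mt x y) z = mt x (mt y z)) \<and>
     (\<forall>x y. jn x (mt x y) = x) \<and> (\<forall>x y. mt x (jn x y) = x) \<and>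
     (\<forall>x y z. mt x (jn y z) = jn (mt x y) (mt x z)) \<and>
     (\<forall>x y z. jn x (mt y z) = mt (jn x y) (jn x z)) \<and>
     (\<forall>x. jn x bt = x) \<and> (\<forall>x. mt x tp = x) \<and>
     (\<forall>x. mt x (cpl x) = bt) \<and> (\<forall>x. jn x (cpl x) = tp)"

definition ring_of :: "('a \<Rightarrow> 'a \<Rightarrow> 'a) \<Rightarrow> ('a \<Rightarrow> 'a \<Rightarrow> 'a) \<Rightarrow> 'a \<Rightarrow> 'a \<Rightarrow> 'a ring" where
  "ring_of pl mu z u = \<lparr>carrier = UNIV, mult = mu, one = u, zero = z, add = pl\<rparr>"

definition is_boolean_ring :: "('a \<Rightarrow> 'a \<Rightarrow> 'a) \<Rightarrow> ('a \<Rightarrow> 'a \<Rightarrow> 'a) \<Rightarrow> 'a \<Rightarrow> 'a \<Rightarrow> bool" where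
  "is_boolean_ring pl mu z u \<longleftrightarrow>
     ring (ring_of pl mu z u) \<and> (\<forall>x. mu x x = x)"

end

theory Submission
  imports Defs
begin

text \<open>
  Read \<open>p a b c\<close> as \<open>if b then c else a\<close>. By (T3) each map \<open>p c _ d\<close> respects \<open>p\<close>
  in the middle argument; so right meets \<open>_ \<sqinter> d\<close> and left joins \<open>d \<squnion> _\<close> distribute over \<open>p\<close>,
  and complementing the middle argument swaps the outer ones. Complementation turns (iv) into (v).
  Under (iv) meet and join are idempotent, associative and complemented, but commutativity has to
  be earned: expanding \<open>s = (a \<squnion> b) \<squnion> -a\<close> as \<open>s \<squnion> s\<close> exposes \<open>-a \<squnion> a\<close>, so \<open>s = 1\<close>, and
  dualising gives the absorption laws \<open>a \<squnion> (a \<sqinter> b) = a = a \<sqinter> (a \<squnion> b)\<close>, which force \<open>\<sqinter>\<close> and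
  \<open>\<squnion>\<close> to commute. In the resulting Boolean algebra, \<open>p a b c\<close> has meets \<open>a \<sqinter> -b\<close> and \<open>c \<sqinter> b\<close>
  with \<open>-b\<close> and \<open>b\<close>, which is (iii); then \<open>p a b (-a)\<close> is the symmetric difference, giving (ii).
  Conversely, in a Boolean algebra or a Boolean ring an element is determined by its meets with
  \<open>b\<close> and \<open>-b\<close>, and comparing these for \<open>p a a b\<close> and \<open>a \<sqinter> b\<close> yields (iv); (iii) yields
  \<open>-a \<sqinter> a = 0\<close> and hence (iv) directly.
\<close>

lemma is_boolean_algebra_iff_abstract_boolean_algebra:
  "is_boolean_algebra jn mt cpl bt tp \<longleftrightarrow> abstract_boolean_algebra mt jn cpl bt tp"
proof
  show "abstract_boolean_algebra mt jn cpl bt tp" if "is_boolean_algebra jn mt cpl bt tp"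
    using that unfolding is_boolean_algebra_def by unfold_locales meson+
next
  assume "abstract_boolean_algebra mt jn cpl bt tp"
  then interpret abstract_boolean_algebra mt jn cpl bt tp .
  have "jn x (mt x y) = x" for x y
    using conj_disj_distrib[of x tp y] by simp
  moreover have "mt x (jn x y) = x" for x y
    using disj_conj_distrib[of x bt y] by simp
  ultimately show "is_boolean_algebra jn mt cpl bt tp"
    unfolding is_boolean_algebra_def
    by (intro conjI allI)
      (rule disj.commute conj.commute disj.assoc conj.assoc conj_disj_distrib disj_conj_distrib
        disj_zero_right conj_one_right conj_cancel_right disj_cancel_right | assumption)+
qed

lemma ring_of_simps [simp]:
  "carrier (ring_of pl mu z u) = UNIV" "add (ring_of pl mu z u) = pl"
  "mult (ring_of pl mu z u) = mu" "zero (ring_of pl mu z u) = z" "one (ring_of pl mu z u) = u"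
  by (simp_all add: ring_of_def)

lemma is_boolean_ring_if_sym_diff:
  assumes "abstract_boolean_algebra_sym_diff mt jn cpl bt tp sd"
  shows "is_boolean_ring sd mt bt tp"
proof -
  interpret B: abstract_boolean_algebra_sym_diff mt jn cpl bt tp sd by (fact assms)
  have "ring (ring_of sd mt bt tp)"
  proof (rule ringI)
    show "abelian_group (ring_of sd mt bt tp)"
    proof (rule abelian_groupI)
      show "\<exists>y\<in>carrier (ring_of sd mt bt tp). y \<oplus>\<^bsub>ring_of sd mt bt tp\<^esub> x = \<zero>\<^bsub>ring_of sd mt bt tp\<^esub>"
        for x
        by (rule bexI[of _ x]) simp_all
    qed (auto simp: B.xor.assoc intro: B.xor.commute)
    show "monoid (ring_of sd mt bt tp)"
      by (rule monoidI) (simp_all add: B.conj.assoc)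
  qed (simp_all only: ring_of_simps B.conj_xor_distribs)
  then show ?thesis
    unfolding is_boolean_ring_def using B.conj.idem by blast
qed

context
  fixes pl mu :: "'a \<Rightarrow> 'a \<Rightarrow> 'a" and z u :: 'a
  assumes boolean_ring: "is_boolean_ring pl mu z u"
begin

interpretation R: ring "ring_of pl mu z u"
  using boolean_ring by (simp add: is_boolean_ring_def)

lemma boolean_ring_mult_idem: "mu x x = x"
  using boolean_ring by (simp add: is_boolean_ring_def)

lemma boolean_ring_add_self: "pl x x = z"
proof -
  have "pl (pl x x) (pl x x) = mu (pl x x) (pl x x)"
    using R.l_distr[of x x "pl x x"] R.r_distr[of x x x] by (simp add: boolean_ring_mult_idem)
  also have "\<dots> = pl x x"
    by (rule boolean_ring_mult_idem)
  finally show ?thesis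
    using R.add.l_cancel_one[of "pl x x" "pl x x"] by simp
qed

lemma boolean_ring_mult_one_add_self: "mu x (pl u x) = z" "mu (pl u x) x = z"
  using R.r_distr[of u x x] R.l_distr[of u x x] R.r_one[of x] R.l_one[of x]
  by (simp_all add: boolean_ring_mult_idem boolean_ring_add_self)

lemma boolean_ring_separation:
  assumes "mu x b = mu y b" and "mu x (pl u b) = mu y (pl u b)"
  shows "x = y"
  using assms R.r_distr[of u b x] R.r_distr[of u b y] R.r_one[of x] R.r_one[of y]
    R.add.right_cancel[of "mu y b" x y] by simp

end

locale ternary_algebra =
  fixes p :: "'a \<Rightarrow> 'a \<Rightarrow> 'a \<Rightarrow> 'a" and z u :: 'a
  assumes p_zero_one [simp]: "p z a u = a"
    and p_same [simp]: "p a b a = a"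
    and p_middle: "p a (p b1 b2 b3) c = p (p a b1 c) b2 (p a b3 c)"
    and p_zero [simp]: "p a z b = a"
    and p_one [simp]: "p b u a = a"
begin

abbreviation cpl :: "'a \<Rightarrow> 'a"  (\<open>\<^bold>- _\<close> [81] 80)
  where "\<^bold>- a \<equiv> p u a z"

abbreviation meet :: "'a \<Rightarrow> 'a \<Rightarrow> 'a"  (infixl \<open>\<^bold>\<sqinter>\<close> 70)
  where "a \<^bold>\<sqinter> b \<equiv> p z a b"

abbreviation join :: "'a \<Rightarrow> 'a \<Rightarrow> 'a"  (infixl \<open>\<^bold>\<squnion>\<close> 65)
  where "a \<^bold>\<squnion> b \<equiv> p a b u"

lemma p_cpl_middle: "p a (\<^bold>- b) c = p c b a"
  by (simp add: p_middle)

lemma cpl_cpl [simp]: "\<^bold>- (\<^bold>- a) = a"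
  by (simp add: p_middle)

lemma cpl_eq_cpl_iff [simp]: "\<^bold>- a = \<^bold>- b \<longleftrightarrow> a = b"
  by (metis cpl_cpl)

lemma cpl_p: "\<^bold>- p a b c = p (\<^bold>- a) b (\<^bold>- c)"
  by (rule p_middle)

lemma meet_p: "p a b c \<^bold>\<sqinter> d = p (a \<^bold>\<sqinter> d) b (c \<^bold>\<sqinter> d)"
  by (rule p_middle)

lemma join_p: "d \<^bold>\<squnion> p a b c = p (d \<^bold>\<squnion> a) b (d \<^bold>\<squnion> c)"
  by (rule p_middle)

lemma p_meet_middle: "p c (a \<^bold>\<sqinter> b) d = p c a (p c b d)"
  by (simp add: p_middle)

lemma p_join_middle: "p c (a \<^bold>\<squnion> b) d = p (p c a d) b d"
  by (simp add: p_middle)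

lemma meet_assoc: "a \<^bold>\<sqinter> b \<^bold>\<sqinter> c = a \<^bold>\<sqinter> (b \<^bold>\<sqinter> c)"
  by (simp add: p_middle)

lemma join_assoc: "a \<^bold>\<squnion> b \<^bold>\<squnion> c = a \<^bold>\<squnion> (b \<^bold>\<squnion> c)"
  by (simp add: p_middle)

lemma cpl_meet: "\<^bold>- (a \<^bold>\<sqinter> b) = \<^bold>- b \<^bold>\<squnion> \<^bold>- a"
  by (simp add: cpl_p p_cpl_middle)

lemma cpl_join: "\<^bold>- (a \<^bold>\<squnion> b) = \<^bold>- b \<^bold>\<sqinter> \<^bold>- a"
  by (simp add: cpl_p p_cpl_middle)

lemma p_diag_meet_iff_p_diag_join:
  "(\<forall>a b. p a a b = a \<^bold>\<sqinter> b) \<longleftrightarrow> (\<forall>a b. p a b b = a \<^bold>\<squnion> b)"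
proof
  assume diag: "\<forall>a b. p a a b = a \<^bold>\<sqinter> b"
  have "p c b (\<^bold>- b) = p c b z" for b c
    using diag[rule_format, of "\<^bold>- b" c] by (simp add: p_cpl_middle)
  then have "\<^bold>- p a b b = \<^bold>- (a \<^bold>\<squnion> b)" for a b
    by (simp add: cpl_p)
  then show "\<forall>a b. p a b b = a \<^bold>\<squnion> b"
    by simp
next
  assume diag: "\<forall>a b. p a b b = a \<^bold>\<squnion> b"
  have "p (\<^bold>- b) b c = p u b c" for b c
    using diag[rule_format, of c "\<^bold>- b"] by (simp add: p_cpl_middle)
  then have "\<^bold>- p a a b = \<^bold>- (a \<^bold>\<sqinter> b)" for a b
    by (simp add: cpl_p)
  then show "\<forall>a b. p a a b = a \<^bold>\<sqinter> b"
    by simp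
qed

lemma p_diag_if_p_eq_mux:
  assumes mux: "\<forall>a b c. p a b c = (\<^bold>- b \<^bold>\<sqinter> a) \<^bold>\<squnion> (b \<^bold>\<sqinter> c)"
  shows "p a a b = a \<^bold>\<sqinter> b"
proof -
  have "\<^bold>- a \<^bold>\<squnion> a = u"
    using mux[rule_format, of u a u] by simp
  then have "\<^bold>- a \<^bold>\<sqinter> a = z"
    using cpl_join[of "\<^bold>- a" a] by simp
  then show ?thesis
    using mux[rule_format, of a a b] by simp
qed

lemma p_diag_if_separating:
  assumes meet_idem: "\<And>a. a \<^bold>\<sqinter> a = a"
    and meet_cpl: "\<And>a. a \<^bold>\<sqinter> \<^bold>- a = z"
    and cpl_meet_self: "\<And>a. \<^bold>- a \<^bold>\<sqinter> a = z"
    and separating: "\<And>b x y. x \<^bold>\<sqinter> b = y \<^bold>\<sqinter> b \<Longrightarrow> x \<^bold>\<sqinter> \<^bold>- b = y \<^bold>\<sqinter> \<^bold>- b \<Longrightarrow> x = y"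
  shows "p a a b = a \<^bold>\<sqinter> b"
proof -
  have join_idem: "a \<^bold>\<squnion> a = a"
  proof (rule separating)
    show "(a \<^bold>\<squnion> a) \<^bold>\<sqinter> a = a \<^bold>\<sqinter> a"
      by (simp add: meet_p meet_idem)
    show "(a \<^bold>\<squnion> a) \<^bold>\<sqinter> \<^bold>- a = a \<^bold>\<sqinter> \<^bold>- a"
      by (simp add: meet_p meet_cpl)
  qed
  show ?thesis
  proof (rule separating)
    have "p a a b \<^bold>\<sqinter> b = (a \<^bold>\<squnion> a) \<^bold>\<sqinter> b"
      by (simp add: meet_p meet_idem)
    then show "p a a b \<^bold>\<sqinter> b = a \<^bold>\<sqinter> b \<^bold>\<sqinter> b"
      by (simp add: join_idem meet_assoc meet_idem)
    have "p a a b \<^bold>\<sqinter> \<^bold>- b = \<^bold>- a \<^bold>\<sqinter> (a \<^bold>\<sqinter> \<^bold>- b)"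
      by (simp add: meet_p meet_cpl p_cpl_middle)
    then show "p a a b \<^bold>\<sqinter> \<^bold>- b = a \<^bold>\<sqinter> b \<^bold>\<sqinter> \<^bold>- b"
      by (simp add: meet_assoc[symmetric] meet_assoc[of a] cpl_meet_self meet_cpl)
  qed
qed

end

locale boolean_ternary_algebra = ternary_algebra +
  assumes p_diag: "p a a b = a \<^bold>\<sqinter> b"
begin

lemma p_diag_join: "p a b b = a \<^bold>\<squnion> b"
  using p_diag p_diag_meet_iff_p_diag_join by blast

lemma meet_idem [simp]: "a \<^bold>\<sqinter> a = a"
  using p_diag[of a a] by simp

lemma join_idem [simp]: "a \<^bold>\<squnion> a = a"
  using p_diag[of a u] by simp

lemma meet_cpl [simp]: "a \<^bold>\<sqinter> \<^bold>- a = z"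
  using p_diag[of "\<^bold>- a" z] by (simp add: p_cpl_middle)

lemma join_cpl [simp]: "a \<^bold>\<squnion> \<^bold>- a = u"
  using p_diag_join[of u a] by (simp add: p_cpl_middle)

lemma cpl_join_self [simp]: "\<^bold>- a \<^bold>\<squnion> a = u"
  using p_diag_join[of u "\<^bold>- a"] by (simp add: p_cpl_middle)

lemma p_absorb_right: "p c a (p d a c) = c"
  using p_meet_middle[of c a "\<^bold>- a" d] by (simp add: p_cpl_middle)

lemma join_meet_absorb2: "b \<^bold>\<squnion> (a \<^bold>\<sqinter> b) = b"
  using join_p[of b z a b] by simp

lemma meet_join_absorb2: "a \<^bold>\<sqinter> (b \<^bold>\<squnion> a) = a"
proof -
  have "a \<^bold>\<sqinter> (b \<^bold>\<squnion> a) = p a a (p b a a)"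
    by (simp only: p_diag p_diag_join)
  then show ?thesis
    by (simp only: p_absorb_right)
qed

lemma join_meet_absorb3: "(a \<^bold>\<sqinter> b) \<^bold>\<squnion> a = a"
proof -
  have "\<^bold>- ((a \<^bold>\<sqinter> b) \<^bold>\<squnion> a) = \<^bold>- a"
    by (simp only: cpl_join cpl_meet meet_join_absorb2)
  then show ?thesis
    by (simp only: cpl_eq_cpl_iff)
qed

lemma join_join_cpl_eq_top: "(a \<^bold>\<squnion> b) \<^bold>\<squnion> \<^bold>- a = u"
proof -
  let ?s = "(a \<^bold>\<squnion> b) \<^bold>\<squnion> \<^bold>- a"
  have "?s = ?s \<^bold>\<squnion> ?s"
    by simp
  also have "\<dots> = (a \<^bold>\<squnion> b) \<^bold>\<squnion> ((\<^bold>- a \<^bold>\<squnion> a) \<^bold>\<squnion> (b \<^bold>\<squnion> \<^bold>- a))"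
    by (simp only: join_assoc)
  finally show ?thesis
    by simp
qed

lemma meet_meet_cpl_eq_bot: "(a \<^bold>\<sqinter> b) \<^bold>\<sqinter> \<^bold>- a = z"
proof -
  have "\<^bold>- ((a \<^bold>\<sqinter> b) \<^bold>\<sqinter> \<^bold>- a) = (a \<^bold>\<squnion> \<^bold>- b) \<^bold>\<squnion> \<^bold>- a"
    by (simp only: cpl_meet cpl_cpl join_assoc)
  also have "\<dots> = \<^bold>- z"
    by (simp add: join_join_cpl_eq_top)
  finally show ?thesis
    by (simp only: cpl_eq_cpl_iff)
qed

lemma join_meet_cpl: "a \<^bold>\<squnion> (c \<^bold>\<sqinter> \<^bold>- a) = a \<^bold>\<squnion> c"
  using join_p[of a z c "\<^bold>- a"] by simp

lemma join_meet_absorb1: "a \<^bold>\<squnion> (a \<^bold>\<sqinter> b) = a"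
  using join_meet_cpl[of a "a \<^bold>\<sqinter> b"] by (simp add: meet_meet_cpl_eq_bot)

lemma meet_join_absorb1: "a \<^bold>\<sqinter> (a \<^bold>\<squnion> b) = a"
proof -
  have "a \<^bold>\<sqinter> (a \<^bold>\<squnion> b) = p a a (a \<^bold>\<squnion> b)"
    by (rule p_diag[symmetric])
  also have "\<dots> = a \<^bold>\<squnion> (a \<^bold>\<sqinter> b)"
    by (rule p_meet_middle[symmetric])
  finally show ?thesis
    by (simp only: join_meet_absorb1)
qed

lemma meet_join_absorb3: "(b \<^bold>\<squnion> a) \<^bold>\<sqinter> a = a"
proof -
  have "\<^bold>- ((b \<^bold>\<squnion> a) \<^bold>\<sqinter> a) = \<^bold>- a"
    by (simp only: cpl_join cpl_meet join_meet_absorb1)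
  then show ?thesis
    by (simp only: cpl_eq_cpl_iff)
qed

lemma meet_comm: "a \<^bold>\<sqinter> b = b \<^bold>\<sqinter> a"
proof -
  have "a \<^bold>\<sqinter> b = (a \<^bold>\<sqinter> b) \<^bold>\<sqinter> ((a \<^bold>\<sqinter> b) \<^bold>\<squnion> a)"
    by (rule meet_join_absorb1[symmetric])
  also have "\<dots> = a \<^bold>\<sqinter> (b \<^bold>\<sqinter> a)"
    by (simp only: join_meet_absorb3 meet_assoc)
  also have "\<dots> = (a \<^bold>\<squnion> (b \<^bold>\<sqinter> a)) \<^bold>\<sqinter> (b \<^bold>\<sqinter> a)"
    by (simp only: join_meet_absorb2)
  also have "\<dots> = b \<^bold>\<sqinter> a"
    by (rule meet_join_absorb3)
  finally show ?thesis .
qed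

lemma join_comm: "a \<^bold>\<squnion> b = b \<^bold>\<squnion> a"
proof -
  have "\<^bold>- (a \<^bold>\<squnion> b) = \<^bold>- (b \<^bold>\<squnion> a)"
    by (simp only: cpl_join meet_comm)
  then show ?thesis
    by (simp only: cpl_eq_cpl_iff)
qed

lemma meet_join_distrib: "a \<^bold>\<sqinter> (b \<^bold>\<squnion> c) = (a \<^bold>\<sqinter> b) \<^bold>\<squnion> (a \<^bold>\<sqinter> c)"
proof -
  have "a \<^bold>\<sqinter> (b \<^bold>\<squnion> c) = (b \<^bold>\<squnion> c) \<^bold>\<sqinter> a"
    by (rule meet_comm)
  also have "\<dots> = p (b \<^bold>\<sqinter> a) c a"
    using meet_p[of b c u a] by simp
  also have "\<dots> = (b \<^bold>\<sqinter> a) \<^bold>\<squnion> (c \<^bold>\<sqinter> a)"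
    using join_p[of "b \<^bold>\<sqinter> a" z c a] join_meet_absorb3[of a b] by (simp add: meet_comm[of a b])
  also have "\<dots> = (a \<^bold>\<sqinter> b) \<^bold>\<squnion> (a \<^bold>\<sqinter> c)"
    by (simp only: meet_comm[of b a] meet_comm[of c a])
  finally show ?thesis .
qed

lemma join_meet_distrib: "a \<^bold>\<squnion> (b \<^bold>\<sqinter> c) = (a \<^bold>\<squnion> b) \<^bold>\<sqinter> (a \<^bold>\<squnion> c)"
  using join_p[of a z b c] meet_p[of a b u "a \<^bold>\<squnion> c"] by (simp add: meet_join_absorb1)

lemma abstract_boolean_algebra: "abstract_boolean_algebra (\<^bold>\<sqinter>) (\<^bold>\<squnion>) cpl z u"
  by unfold_locales
    (rule meet_assoc join_assoc meet_comm join_comm meet_join_distrib join_meet_distrib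
      p_zero_one p_zero meet_cpl join_cpl)+

lemma p_meet_meet: "p (a \<^bold>\<sqinter> b) b (c \<^bold>\<sqinter> b) = c \<^bold>\<sqinter> b"
proof -
  define x y where "x = a \<^bold>\<sqinter> b" and "y = c \<^bold>\<sqinter> b"
  define w where "w = p x b y"
  have "x \<^bold>\<squnion> b = b"
    unfolding x_def by (metis join_comm join_meet_absorb2)
  then have "w = p (x \<^bold>\<sqinter> y) b y"
    using p_join_middle[of x x b y] p_diag[of x y] by (simp add: w_def)
  then have w_meet: "w \<^bold>\<sqinter> y = w"
    using meet_p[of "x \<^bold>\<sqinter> y" b y y] by (simp add: meet_assoc)
  have "b \<^bold>\<squnion> y = b"
    unfolding y_def by (rule join_meet_absorb2)
  then have w_join: "w \<^bold>\<squnion> y = w"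
    using p_join_middle[of x b y y] p_diag_join[of w y] by (simp add: w_def)
  have "y = y \<^bold>\<sqinter> (y \<^bold>\<squnion> w)"
    by (simp only: meet_join_absorb1)
  also have "\<dots> = w"
    by (simp only: join_comm[of y] w_join meet_comm[of y] w_meet)
  finally show ?thesis
    by (simp add: w_def x_def y_def)
qed

lemma p_eq_mux: "p a b c = (\<^bold>- b \<^bold>\<sqinter> a) \<^bold>\<squnion> (b \<^bold>\<sqinter> c)"
proof -
  have pos: "p a b c \<^bold>\<sqinter> b = c \<^bold>\<sqinter> b"
    by (simp add: meet_p p_meet_meet)
  have neg: "p a b c \<^bold>\<sqinter> \<^bold>- b = a \<^bold>\<sqinter> \<^bold>- b"
    using p_meet_meet[of c "\<^bold>- b" a] by (simp add: meet_p p_cpl_middle)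
  have "p a b c = p a b c \<^bold>\<sqinter> (\<^bold>- b \<^bold>\<squnion> b)"
    by simp
  also have "\<dots> = (p a b c \<^bold>\<sqinter> \<^bold>- b) \<^bold>\<squnion> (p a b c \<^bold>\<sqinter> b)"
    by (rule meet_join_distrib)
  also have "\<dots> = (\<^bold>- b \<^bold>\<sqinter> a) \<^bold>\<squnion> (b \<^bold>\<sqinter> c)"
    by (simp only: pos neg meet_comm[of a] meet_comm[of c])
  finally show ?thesis .
qed

lemma is_boolean_algebra: "is_boolean_algebra (\<^bold>\<squnion>) (\<^bold>\<sqinter>) cpl z u"
  by (simp add: is_boolean_algebra_iff_abstract_boolean_algebra abstract_boolean_algebra)

lemma is_boolean_ring: "is_boolean_ring (\<lambda>a b. p a b (\<^bold>- a)) (\<^bold>\<sqinter>) z u"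
proof (rule is_boolean_ring_if_sym_diff)
  show "abstract_boolean_algebra_sym_diff (\<^bold>\<sqinter>) (\<^bold>\<squnion>) cpl z u (\<lambda>a b. p a b (\<^bold>- a))"
  proof (rule abstract_boolean_algebra_sym_diff.intro[OF abstract_boolean_algebra], unfold_locales)
    show "p a b (\<^bold>- a) = (a \<^bold>\<sqinter> \<^bold>- b) \<^bold>\<squnion> (\<^bold>- a \<^bold>\<sqinter> b)" for a b
      unfolding p_eq_mux[of a b "\<^bold>- a"] by (simp only: meet_comm[of "\<^bold>- b"] meet_comm[of b])
  qed
qed

end

context ternary_algebra
begin

lemma is_boolean_algebra_iff_p_diag:
  "is_boolean_algebra (\<^bold>\<squnion>) (\<^bold>\<sqinter>) cpl z u \<longleftrightarrow> (\<forall>a b. p a a b = a \<^bold>\<sqinter> b)"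
proof
  assume "is_boolean_algebra (\<^bold>\<squnion>) (\<^bold>\<sqinter>) cpl z u"
  then interpret abstract_boolean_algebra "(\<^bold>\<sqinter>)" "(\<^bold>\<squnion>)" cpl z u
    by (simp add: is_boolean_algebra_iff_abstract_boolean_algebra)
  show "\<forall>a b. p a a b = a \<^bold>\<sqinter> b"
  proof (intro allI p_diag_if_separating)
    show "x = y" if "x \<^bold>\<sqinter> b = y \<^bold>\<sqinter> b" and "x \<^bold>\<sqinter> \<^bold>- b = y \<^bold>\<sqinter> \<^bold>- b" for b x y
      using that conj_disj_distrib[of x b "\<^bold>- b"] conj_disj_distrib[of y b "\<^bold>- b"] by simp
  qed simp_all
next
  assume "\<forall>a b. p a a b = a \<^bold>\<sqinter> b"
  then interpret boolean_ternary_algebra p z u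
    by unfold_locales blast
  show "is_boolean_algebra (\<^bold>\<squnion>) (\<^bold>\<sqinter>) cpl z u"
    by (rule is_boolean_algebra)
qed

lemma is_boolean_ring_iff_p_diag:
  "is_boolean_ring (\<lambda>a b. p a b (\<^bold>- a)) (\<^bold>\<sqinter>) z u \<longleftrightarrow> (\<forall>a b. p a a b = a \<^bold>\<sqinter> b)"
proof
  assume br: "is_boolean_ring (\<lambda>a b. p a b (\<^bold>- a)) (\<^bold>\<sqinter>) z u"
  show "\<forall>a b. p a a b = a \<^bold>\<sqinter> b"
  proof (intro allI p_diag_if_separating)
    show "a \<^bold>\<sqinter> a = a" for a
      by (rule boolean_ring_mult_idem[OF br])
    show "a \<^bold>\<sqinter> \<^bold>- a = z" and "\<^bold>- a \<^bold>\<sqinter> a = z" for a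
      using boolean_ring_mult_one_add_self[OF br, of a] by simp_all
    show "x = y" if "x \<^bold>\<sqinter> b = y \<^bold>\<sqinter> b" and "x \<^bold>\<sqinter> \<^bold>- b = y \<^bold>\<sqinter> \<^bold>- b" for b x y
      using boolean_ring_separation[OF br, of x b y] that by simp
  qed
next
  assume "\<forall>a b. p a a b = a \<^bold>\<sqinter> b"
  then interpret boolean_ternary_algebra p z u
    by unfold_locales blast
  show "is_boolean_ring (\<lambda>a b. p a b (\<^bold>- a)) (\<^bold>\<sqinter>) z u"
    by (rule is_boolean_ring)
qed

lemma p_eq_mux_iff_p_diag:
  "(\<forall>a b c. p a b c = (\<^bold>- b \<^bold>\<sqinter> a) \<^bold>\<squnion> (b \<^bold>\<sqinter> c)) \<longleftrightarrow> (\<forall>a b. p a a b = a \<^bold>\<sqinter> b)"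
proof
  assume "\<forall>a b c. p a b c = (\<^bold>- b \<^bold>\<sqinter> a) \<^bold>\<squnion> (b \<^bold>\<sqinter> c)"
  then show "\<forall>a b. p a a b = a \<^bold>\<sqinter> b"
    using p_diag_if_p_eq_mux by blast
next
  assume "\<forall>a b. p a a b = a \<^bold>\<sqinter> b"
  then interpret boolean_ternary_algebra p z u
    by unfold_locales blast
  show "\<forall>a b c. p a b c = (\<^bold>- b \<^bold>\<sqinter> a) \<^bold>\<squnion> (b \<^bold>\<sqinter> c)"
    using p_eq_mux by blast
qed

end

theorem theorem1:
  fixes p :: "'a \<Rightarrow> 'a \<Rightarrow> 'a \<Rightarrow> 'a" and z u :: 'a
  assumes T1: "\<And>a. p z a u = a"
    and T2: "\<And>a b. p a b a = a"
    and T3: "\<And>a b1 b2 b3 c. p a (p b1 b2 b3) c = p (p a b1 c) b2 (p a b3 c)"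
    and T4: "\<And>a b. p a z b = a \<and> a = p b u a"
  defines "cpl \<equiv> \<lambda>a. p u a z"
    and "mul \<equiv> \<lambda>a b. p z a b"
    and "jn \<equiv> \<lambda>a b. p a b u"
    and "pl \<equiv> \<lambda>a b. p a b (p u a z)"
  shows "(is_boolean_algebra jn mul cpl z u \<longleftrightarrow> is_boolean_ring pl mul z u)
       \<and> (is_boolean_ring pl mul z u \<longleftrightarrow> (\<forall>a b c. p a b c = jn (mul (cpl b) a) (mul b c)))
       \<and> ((\<forall>a b c. p a b c = jn (mul (cpl b) a) (mul b c)) \<longleftrightarrow> (\<forall>a b. p a a b = mul a b))
       \<and> ((\<forall>a b. p a a b = mul a b) \<longleftrightarrow> (\<forall>a b. p a b b = jn a b))"
proof -
  interpret ternary_algebra p z u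
    using T1 T2 T3 T4 by unfold_locales simp_all
  show ?thesis
    unfolding cpl_def mul_def jn_def pl_def
    using is_boolean_algebra_iff_p_diag is_boolean_ring_iff_p_diag p_eq_mux_iff_p_diag
      p_diag_meet_iff_p_diag_join
    by blast
qed

end
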